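(* Let $A$ be an operator in a von Neumann algebra $\mathscr{R}$ acting on a Hilbert space $\mathscr{H}$. Then the left ideal $\mathscr{R}A$ is norm-closed if and only if $\mathscr{R}A$ is weak-operator closed. *)

theory Defs
  imports "HOL-Analysis.Analysis"
begin

class complex_vector = real_vector +
  fixes scaleC :: "complex \<Rightarrow> 'a \<Rightarrow> 'a"
  assumes scaleC_add_right: "scaleC a (x + y) = scaleC a x + scaleC a y"
    and scaleC_add_left: "scaleC (a + b) x = scaleC a x + scaleC b x"
    and scaleC_scaleC: "scaleC a (scaleC b x) = scaleC (a * b) x"
    and scaleC_one: "scaleC 1 x = x"
    and scaleR_scaleC: "scaleR r x = scaleC (complex_of_real r) x"

class complex_inner = complex_vector + real_normed_vector +
  fixes cinner :: "'a \<Rightarrow> 'a \<Rightarrow> complex"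
  assumes cinner_commute: "cinner x y = cnj (cinner y x)"
    and cinner_add_right: "cinner x (y + z) = cinner x y + cinner x z"
    and cinner_scaleC_right: "cinner x (scaleC a y) = a * cinner x y"
    and cinner_ge_zero: "0 \<le> Re (cinner x x)"
    and cinner_eq_zero_iff: "cinner x x = 0 \<longleftrightarrow> x = 0"
    and norm_eq_sqrt_cinner: "norm x = sqrt (Re (cinner x x))"

class chilbert_space = complex_inner + complete_space

text \<open>Bounded operators on H: bounded (real-)linear maps that are complex-linear.
  The norm topology on them is the operator-norm topology of the blinfun type.\<close>
definition bounded_op :: "('h::chilbert_space \<Rightarrow>\<^sub>L 'h) \<Rightarrow> bool" where
  "bounded_op T \<longleftrightarrow> (\<forall>c x. blinfun_apply T (scaleC c x) = scaleC c (blinfun_apply T x))"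

definition is_adjoint :: "('h::chilbert_space \<Rightarrow>\<^sub>L 'h) \<Rightarrow> ('h \<Rightarrow>\<^sub>L 'h) \<Rightarrow> bool" where
  "is_adjoint T S \<longleftrightarrow> (\<forall>x y. cinner (blinfun_apply T x) y = cinner x (blinfun_apply S y))"

text \<open>T lies in the weak-operator closure of S: every basic WOT neighbourhood
  {U. \<forall>(x,y)\<in>F. |<(T - U) x, y>| < e} (F finite, e > 0) meets S.\<close>
definition wot_adherent :: "('h::chilbert_space \<Rightarrow>\<^sub>L 'h) set \<Rightarrow> ('h \<Rightarrow>\<^sub>L 'h) \<Rightarrow> bool" where
  "wot_adherent S T \<longleftrightarrow>
     (\<forall>F::('h \<times> 'h) set. \<forall>e>0. finite F \<longrightarrow>
        (\<exists>U\<in>S. \<forall>(x, y)\<in>F. cmod (cinner (blinfun_apply T x - blinfun_apply U x) y) < e))"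

definition wot_closed :: "('h::chilbert_space \<Rightarrow>\<^sub>L 'h) set \<Rightarrow> bool" where
  "wot_closed S \<longleftrightarrow> (\<forall>T. bounded_op T \<and> wot_adherent S T \<longrightarrow> T \<in> S)"

definition von_neumann_algebra :: "('h::chilbert_space \<Rightarrow>\<^sub>L 'h) set \<Rightarrow> bool" where
  "von_neumann_algebra R \<longleftrightarrow>
     (\<forall>T\<in>R. bounded_op T) \<and>
     id_blinfun \<in> R \<and>
     (\<forall>S\<in>R. \<forall>T\<in>R. S + T \<in> R) \<and>
     (\<forall>c. \<forall>T\<in>R. \<exists>U\<in>R. \<forall>x. blinfun_apply U x = scaleC c (blinfun_apply T x)) \<and>
     (\<forall>S\<in>R. \<forall>T\<in>R. S o\<^sub>L T \<in> R) \<and>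
     (\<forall>T\<in>R. \<exists>S\<in>R. is_adjoint T S) \<and>
     wot_closed R"

definition left_mult_set :: "('h::chilbert_space \<Rightarrow>\<^sub>L 'h) set \<Rightarrow> ('h \<Rightarrow>\<^sub>L 'h) \<Rightarrow> ('h \<Rightarrow>\<^sub>L 'h) set" where
  "left_mult_set R A = (\<lambda>T. T o\<^sub>L A) ` R"

end

theory Submission
  imports Defs
begin

text \<open>Weak-operator closedness implies norm closedness because norm limits are weak-operator
  limits. Conversely, let \<open>R A\<close> be norm closed and \<open>M > \<parallel>A\<parallel>\<^sup>2\<close>. The contraction
  \<open>K = I - A\<^sup>*A / M\<close> satisfies \<open>I - K\<^sup>n \<in> R A\<close>, and telescoping
  \<open>\<parallel>K x\<parallel>\<^sup>2 \<le> \<parallel>x\<parallel>\<^sup>2 - \<parallel>A x\<parallel>\<^sup>2 / M\<close> gives \<open>\<parallel>A K\<^sup>n x\<parallel> \<le> sqrt (M / n) \<parallel>x\<parallel>\<close>.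
  The open mapping theorem for \<open>T \<mapsto> T A\<close> on \<open>R\<close> yields \<open>\<parallel>U x\<parallel> \<le> C \<parallel>U\<parallel> \<parallel>A x\<parallel>\<close>
  for \<open>U \<in> R A\<close>, so \<open>(K\<^sup>n)\<close> is norm Cauchy; its limit \<open>E\<close> satisfies \<open>A E = 0\<close> and
  \<open>I - E = T A \<in> R A\<close>. An operator \<open>S\<close> in the weak-operator closure of \<open>R A\<close> lies in \<open>R\<close>
  and vanishes on the kernel of \<open>A\<close>, hence \<open>S = S (I - E) = (S T) A \<in> R A\<close>.\<close>

section \<open>Complex inner product spaces\<close>

instance chilbert_space \<subseteq> banach ..

lemma cinner_add_left: "cinner (x + y) z = cinner x z + cinner (y::'a::complex_inner) z"
  by (metis cinner_add_right cinner_commute complex_cnj_add)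

lemma cinner_scaleC_left: "cinner (scaleC a x) (y::'a::complex_inner) = cnj a * cinner x y"
  by (metis cinner_commute cinner_scaleC_right complex_cnj_mult)

lemma cinner_zero_right [simp]: "cinner x (0::'a::complex_inner) = 0"
  using cinner_add_right[of x 0 0] by simp

lemma cinner_diff_right: "cinner x (y - z) = cinner x y - cinner x (z::'a::complex_inner)"
  using cinner_add_right[of x "y - z" z] by simp

lemma cinner_diff_left: "cinner (x - y) z = cinner x z - cinner y (z::'a::complex_inner)"
  using cinner_add_left[of "x - y" y z] by simp

lemma cinner_scaleR_right: "cinner x (scaleR r y) = of_real r * cinner x (y::'a::complex_inner)"
  by (simp add: scaleR_scaleC cinner_scaleC_right)

lemma cinner_self: "cinner x (x::'a::complex_inner) = of_real ((norm x)\<^sup>2)"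
proof -
  have "Im (cinner x x) = 0"
    using cinner_commute[of x x] by (metis cnj.simps(2) neg_equal_zero)
  moreover have "(norm x)\<^sup>2 = Re (cinner x x)"
    using norm_eq_sqrt_cinner[of x] cinner_ge_zero[of x] by simp
  ultimately show ?thesis by (simp add: complex_eq_iff)
qed

lemma norm_diff_power2:
  "(norm (x - y))\<^sup>2 = (norm x)\<^sup>2 - 2 * Re (cinner x y) + (norm (y::'a::complex_inner))\<^sup>2"
proof -
  have "of_real ((norm (x - y))\<^sup>2) = cinner x x - cinner x y - cinner y x + cinner y y"
    unfolding cinner_self[symmetric] by (simp add: cinner_diff_left cinner_diff_right)
  then have "(norm (x - y))\<^sup>2 = Re (cinner x x) - Re (cinner x y) - Re (cinner y x) + Re (cinner y y)"
    by (metis Re_complex_of_real minus_complex.sel(1) plus_complex.sel(1))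
  moreover have "Re (cinner y x) = Re (cinner x y)"
    using cinner_commute[of y x] by simp
  ultimately show ?thesis by (simp add: cinner_self)
qed

lemma complex_Cauchy_Schwarz: "cmod (cinner x y) \<le> norm x * norm (y::'a::complex_inner)"
proof (cases "y = 0")
  case True
  then show ?thesis by simp
next
  case False
  define n where "n = (norm y)\<^sup>2"
  define w where "w = cinner y x"
  define q where "q = (of_real (cmod w))\<^sup>2 / (of_real n :: complex)"
  define c where "c = w / of_real n"
  have n: "n > 0" using False by (simp add: n_def)
  have wn: "w * cnj w = (of_real (cmod w))\<^sup>2" using complex_norm_square[of w] by simp
  \<comment> \<open>expand \<open>0 \<le> \<parallel>x - c y\<parallel>\<^sup>2\<close> at the minimising \<open>c = \<langle>y, x\<rangle> / \<parallel>y\<parallel>\<^sup>2\<close>\<close>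
  have "0 \<le> Re (cinner (x - scaleC c y) (x - scaleC c y))" by (rule cinner_ge_zero)
  also have "cinner (x - scaleC c y) (x - scaleC c y) =
      cinner x x - c * cinner x y - cnj c * cinner y x + cnj c * c * cinner y y"
    by (simp add: cinner_diff_left cinner_diff_right cinner_scaleC_left cinner_scaleC_right algebra_simps)
  also have "\<dots> = cinner x x - q"
    using wn n by (simp add: w_def c_def q_def n_def cinner_self cinner_commute[of x y] power2_eq_square
        field_simps)
  finally have "0 \<le> (norm x)\<^sup>2 - (cmod w)\<^sup>2 / n"
    by (metis Re_complex_of_real cinner_self minus_complex.sel(1) of_real_divide of_real_power q_def)
  then have "(cmod w)\<^sup>2 \<le> (norm x * norm y)\<^sup>2"
    using n by (simp add: n_def field_simps)
  then have "cmod w \<le> norm x * norm y"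
    by (meson mult_nonneg_nonneg norm_ge_zero power2_le_imp_le)
  then show ?thesis using cinner_commute[of x y] by (simp add: w_def)
qed

lemma norm_scaleC: "norm (scaleC c x) = cmod c * norm (x::'a::complex_inner)"
proof -
  have "of_real ((norm (scaleC c x))\<^sup>2) = (cnj c * c) * cinner x x"
    unfolding cinner_self[symmetric] by (simp add: cinner_scaleC_left cinner_scaleC_right)
  also have "cnj c * c = of_real ((cmod c)\<^sup>2)"
    using complex_norm_square[of c] by (simp add: mult.commute)
  finally have "of_real ((norm (scaleC c x))\<^sup>2) = (complex_of_real (cmod c * norm x))\<^sup>2"
    by (simp add: cinner_self power_mult_distrib)
  then show ?thesis by (metis of_real_eq_iff of_real_power norm_ge_zero mult_nonneg_nonneg power2_eq_iff_nonneg)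
qed

lemma bounded_linear_scaleC: "bounded_linear (scaleC c :: 'a::complex_inner \<Rightarrow> 'a)"
proof
  show "scaleC c (x + y) = scaleC c x + scaleC c y" for x y :: 'a
    by (rule scaleC_add_right)
  show "scaleC c (r *\<^sub>R x) = r *\<^sub>R scaleC c x" for r and x :: 'a
    by (simp add: scaleR_scaleC scaleC_scaleC mult.commute)
  show "\<exists>K. \<forall>x::'a. norm (scaleC c x) \<le> norm x * K"
    by (metis norm_scaleC mult.commute order_refl)
qed

lemma continuous_on_scaleC [continuous_intros]:
  "continuous_on S f \<Longrightarrow> continuous_on S (\<lambda>x. scaleC c (f x :: 'a::complex_inner))"
  by (rule bounded_linear.continuous_on[OF bounded_linear_scaleC])

lemma closed_bounded_op: "closed {T :: 'h::chilbert_space \<Rightarrow>\<^sub>L 'h. bounded_op T}"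
  unfolding bounded_op_def
  by (intro closed_Collect_all closed_Collect_eq continuous_intros)

section \<open>Von Neumann algebras and the weak-operator topology\<close>

lemma von_neumann_algebraD:
  assumes "von_neumann_algebra R"
  shows von_neumann_algebra_bounded_op: "T \<in> R \<Longrightarrow> bounded_op T"
    and von_neumann_algebra_id: "id_blinfun \<in> R"
    and von_neumann_algebra_add: "S \<in> R \<Longrightarrow> T \<in> R \<Longrightarrow> S + T \<in> R"
    and von_neumann_algebra_compose: "S \<in> R \<Longrightarrow> T \<in> R \<Longrightarrow> S o\<^sub>L T \<in> R"
    and von_neumann_algebra_adjoint: "T \<in> R \<Longrightarrow> \<exists>S\<in>R. is_adjoint T S"
    and von_neumann_algebra_wot_closed: "wot_closed R"
  using assms unfolding von_neumann_algebra_def by blast+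

lemma von_neumann_algebra_scaleR:
  assumes "von_neumann_algebra R" and "T \<in> R"
  shows "r *\<^sub>R T \<in> R"
proof -
  obtain U where "U \<in> R" and U: "\<And>x. U x = scaleC (of_real r) (T x)"
    using assms unfolding von_neumann_algebra_def by meson
  moreover have "U = r *\<^sub>R T"
    by (rule blinfun_eqI) (simp add: U scaleR_scaleC scaleR_blinfun.rep_eq)
  ultimately show ?thesis by simp
qed

lemma von_neumann_algebra_subspace: "von_neumann_algebra R \<Longrightarrow> subspace R"
  unfolding subspace_def
  by (metis von_neumann_algebra_add von_neumann_algebra_id von_neumann_algebra_scaleR scaleR_zero_left)

lemma wot_adherent_mono: "S \<subseteq> S' \<Longrightarrow> wot_adherent S T \<Longrightarrow> wot_adherent S' T"
  unfolding wot_adherent_def by (meson subsetD)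

lemma cmod_cinner_apply_le:
  fixes T :: "'a::complex_inner \<Rightarrow>\<^sub>L 'a"
  shows "cmod (cinner (T x) y) \<le> norm T * norm x * norm y"
proof -
  have "cmod (cinner (T x) y) \<le> norm (T x) * norm y"
    by (rule complex_Cauchy_Schwarz)
  also have "\<dots> \<le> norm T * norm x * norm y"
    by (simp add: mult_right_mono norm_blinfun)
  finally show ?thesis .
qed

lemma wot_adherent_if_closure:
  fixes T :: "'h::chilbert_space \<Rightarrow>\<^sub>L 'h"
  assumes "T \<in> closure S"
  shows "wot_adherent S T"
  unfolding wot_adherent_def
proof (intro allI impI)
  fix F :: "('h \<times> 'h) set" and e :: real
  assume "e > 0" and "finite F"
  define B where "B = (\<Sum>p\<in>F. norm (fst p) * norm (snd p)) + 1"
  have "B > 0"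
    unfolding B_def by (smt (verit) mult_nonneg_nonneg norm_ge_zero sum_nonneg)
  then obtain U where "U \<in> S" and U: "norm (T - U) < e / B"
    using assms \<open>e > 0\<close> unfolding closure_approachable dist_norm
    by (metis divide_pos_pos norm_minus_commute)
  have "cmod (cinner (T x - U x) y) < e" if "(x, y) \<in> F" for x y
  proof -
    have "norm x * norm y \<le> B"
      using member_le_sum[of "(x, y)" F "\<lambda>p. norm (fst p) * norm (snd p)"] that \<open>finite F\<close>
      by (simp add: B_def)
    have "cmod (cinner (T x - U x) y) \<le> norm (T - U) * (norm x * norm y)"
      using cmod_cinner_apply_le[of "T - U" x y] by (simp add: blinfun.diff_left mult.assoc)
    also have "\<dots> \<le> norm (T - U) * B"
      by (rule mult_left_mono[OF \<open>norm x * norm y \<le> B\<close>]) simp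
    also have "\<dots> < e"
      using U \<open>B > 0\<close> by (simp add: pos_less_divide_eq)
    finally show ?thesis .
  qed
  then show "\<exists>U\<in>S. \<forall>(x, y)\<in>F. cmod (cinner (T x - U x) y) < e"
    using \<open>U \<in> S\<close> by blast
qed

lemma closed_if_wot_closed:
  fixes S :: "('h::chilbert_space \<Rightarrow>\<^sub>L 'h) set"
  assumes "\<And>U. U \<in> S \<Longrightarrow> bounded_op U" and "wot_closed S"
  shows "closed S"
proof -
  have "closure S \<subseteq> {T. bounded_op T}"
    using assms(1) by (intro closure_minimal closed_bounded_op) auto
  then have "closure S \<subseteq> S"
    using assms(2) wot_adherent_if_closure unfolding wot_closed_def by blast
  then show ?thesis by (simp add: closure_subset_eq)
qed

lemma von_neumann_algebra_closed: "von_neumann_algebra R \<Longrightarrow> closed R"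
  by (metis closed_if_wot_closed von_neumann_algebra_bounded_op von_neumann_algebra_wot_closed)

lemma left_mult_set_subset:
  "von_neumann_algebra R \<Longrightarrow> A \<in> R \<Longrightarrow> left_mult_set R A \<subseteq> R"
  unfolding left_mult_set_def using von_neumann_algebra_compose by blast

lemma wot_adherent_left_mult_set_vanishes:
  assumes "wot_adherent (left_mult_set R A) S" and "A v = 0"
  shows "S v = 0"
proof -
  have "(norm (S v))\<^sup>2 \<le> e" if "e > 0" for e
  proof -
    have "\<exists>U\<in>left_mult_set R A. \<forall>(x, y)\<in>{(v, S v)}. cmod (cinner (S x - U x) y) < e"
      using assms(1) \<open>e > 0\<close> unfolding wot_adherent_def by blast
    then obtain U where "U \<in> left_mult_set R A" and U: "cmod (cinner (S v - U v) (S v)) < e"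
      by blast
    moreover from \<open>U \<in> left_mult_set R A\<close> have "U v = 0"
      using assms(2) unfolding left_mult_set_def by auto
    moreover have "cmod (cinner (S v) (S v)) = (norm (S v))\<^sup>2"
      by (simp only: cinner_self norm_of_real) simp
    ultimately show ?thesis by simp
  qed
  then have "(norm (S v))\<^sup>2 \<le> 0"
    by (meson dense not_le)
  then show ?thesis by simp
qed

section \<open>Bounded preimages under maps with closed range\<close>

lemma Baire_closed_cover:
  fixes Y :: "'a::complete_space set" and G :: "nat \<Rightarrow> 'a set"
  assumes "closed Y" "Y \<noteq> {}" "\<And>n. closed (G n)" "Y \<subseteq> (\<Union>n. G n)"
  shows "\<exists>n y0 r. r > 0 \<and> y0 \<in> Y \<and> (\<forall>y\<in>Y. dist y y0 < r \<longrightarrow> y \<in> G n)"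
proof (rule ccontr)
  assume no_ball: "\<not> ?thesis"
  let ?X = "top_of_set Y"
  have "?X interior_of (\<Union>n. Y \<inter> G n) = {}"
  proof (rule Baire_category_alt)
    show "completely_metrizable_space ?X \<or> locally_compact_space ?X \<and> regular_space ?X"
      using completely_metrizable_space_closedin[OF completely_metrizable_space_euclidean]
        \<open>closed Y\<close> closed_closedin by blast
    fix T assume "T \<in> range (\<lambda>n. Y \<inter> G n)"
    then obtain n where T: "T = Y \<inter> G n" by auto
    have "U = {}" if "openin ?X U" "U \<subseteq> T" for U
    proof (rule ccontr)
      assume "U \<noteq> {}"
      then obtain y0 where "y0 \<in> U" by auto
      obtain V where "open V" "U = Y \<inter> V"
        using \<open>openin ?X U\<close> unfolding openin_open by blast
      then obtain r where "r > 0" "ball y0 r \<subseteq> V"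
        using \<open>y0 \<in> U\<close> open_contains_ball by blast
      have "\<forall>y\<in>Y. dist y y0 < r \<longrightarrow> y \<in> G n"
      proof (intro ballI impI)
        fix y assume "y \<in> Y" "dist y y0 < r"
        then have "y \<in> ball y0 r" by (simp add: dist_commute)
        then have "y \<in> U"
          using \<open>ball y0 r \<subseteq> V\<close> \<open>U = Y \<inter> V\<close> \<open>y \<in> Y\<close> by blast
        then show "y \<in> G n" using \<open>U \<subseteq> T\<close> T by blast
      qed
      then show False
        using no_ball \<open>r > 0\<close> \<open>y0 \<in> U\<close> \<open>U = Y \<inter> V\<close> by blast
    qed
    then show "closedin ?X T \<and> ?X interior_of T = {}"
      unfolding T interior_of_eq_empty using closedin_closed_Int[OF assms(3)] by blast
  qed simp
  moreover have "(\<Union>n. Y \<inter> G n) = topspace ?X"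
    using assms(4) by auto
  ultimately show False
    using \<open>Y \<noteq> {}\<close> by (metis interior_of_topspace topspace_euclidean_subtopology)
qed

lemma bounded_approximate_preimage_near_zero:
  fixes L :: "'a::real_normed_vector \<Rightarrow> 'b::banach"
  assumes L: "linear L" and X: "subspace X" and closed_image: "closed (L ` X)"
  shows "\<exists>n r. r > 0 \<and>
    (\<forall>y\<in>L ` X. norm y < r \<longrightarrow> (\<forall>\<delta>>0. \<exists>x\<in>X. norm x \<le> n \<and> norm (y - L x) < \<delta>))"
proof -
  define G where "G n = closure (L ` (X \<inter> cball 0 (real n)))" for n
  have "L ` X \<subseteq> (\<Union>n. G n)"
  proof
    fix y assume "y \<in> L ` X"
    then obtain x where "x \<in> X" "y = L x" by auto
    moreover obtain n where "norm x \<le> real n" using real_arch_simple by blast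
    ultimately have "y \<in> L ` (X \<inter> cball 0 (real n))" by auto
    then have "y \<in> G n"
      unfolding G_def by (rule subsetD[OF closure_subset])
    then show "y \<in> (\<Union>n. G n)" by blast
  qed
  moreover have "L ` X \<noteq> {}"
    using subspace_0[OF X] by blast
  ultimately have "\<exists>n y0 r. r > 0 \<and> y0 \<in> L ` X \<and> (\<forall>y\<in>L ` X. dist y y0 < r \<longrightarrow> y \<in> G n)"
    by (intro Baire_closed_cover[OF closed_image]) (simp_all add: G_def)
  then obtain n y0 r where "r > 0" "y0 \<in> L ` X"
    and ball: "\<And>y. y \<in> L ` X \<Longrightarrow> dist y y0 < r \<Longrightarrow> y \<in> G n"
    by blast
  \<comment> \<open>approximate \<open>y = (y0 + y) - y0\<close> by differences of images of two points of norm \<open>\<le> n\<close>\<close>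
  have "\<exists>x\<in>X. norm x \<le> 2 * real n \<and> norm (y - L x) < \<delta>"
    if "y \<in> L ` X" "norm y < r" "\<delta> > 0" for y \<delta>
  proof -
    have "y0 + y \<in> L ` X"
      using subspace_add[OF linear_subspace_image[OF L X] \<open>y0 \<in> L ` X\<close> \<open>y \<in> L ` X\<close>] .
    then have "y0 + y \<in> G n" "y0 \<in> G n"
      using ball[of "y0 + y"] ball[OF \<open>y0 \<in> L ` X\<close>] \<open>norm y < r\<close> \<open>r > 0\<close> by (simp_all add: dist_norm)
    then obtain w1 w2 where "w1 \<in> L ` (X \<inter> cball 0 (real n))" "dist w1 (y0 + y) < \<delta> / 2"
      and "w2 \<in> L ` (X \<inter> cball 0 (real n))" "dist w2 y0 < \<delta> / 2"
      unfolding G_def closure_approachable using \<open>\<delta> > 0\<close> by (meson half_gt_zero)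
    then obtain x1 x2 where "x1 \<in> X" "norm x1 \<le> real n" "w1 = L x1"
      and "x2 \<in> X" "norm x2 \<le> real n" "w2 = L x2"
      by auto
    have "y - L (x1 - x2) = (y0 + y - w1) - (y0 - w2)"
      using \<open>w1 = L x1\<close> \<open>w2 = L x2\<close> by (simp add: linear_diff[OF L])
    then have "norm (y - L (x1 - x2)) \<le> norm (y0 + y - w1) + norm (y0 - w2)"
      by (metis norm_triangle_ineq4)
    also have "\<dots> < \<delta>"
      using \<open>dist w1 (y0 + y) < \<delta> / 2\<close> \<open>dist w2 y0 < \<delta> / 2\<close>
      by (simp add: dist_norm norm_minus_commute)
    finally have "norm (y - L (x1 - x2)) < \<delta>" .
    moreover have "norm (x1 - x2) \<le> 2 * real n"
      using norm_triangle_ineq4[of x1 x2] \<open>norm x1 \<le> real n\<close> \<open>norm x2 \<le> real n\<close> by linarith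
    ultimately show ?thesis
      using subspace_diff[OF X \<open>x1 \<in> X\<close> \<open>x2 \<in> X\<close>] by blast
  qed
  with \<open>r > 0\<close> show ?thesis by blast
qed

lemma bounded_approximate_preimage:
  fixes L :: "'a::real_normed_vector \<Rightarrow> 'b::banach"
  assumes L: "linear L" and X: "subspace X" and "closed (L ` X)"
  shows "\<exists>c>0. \<forall>y\<in>L ` X. \<forall>\<delta>>0. \<exists>x\<in>X. norm x \<le> c * norm y \<and> norm (y - L x) < \<delta>"
proof -
  obtain n r where "r > 0"
    and near_zero: "\<And>y \<delta>. y \<in> L ` X \<Longrightarrow> norm y < r \<Longrightarrow> \<delta> > 0 \<Longrightarrow>
      \<exists>x\<in>X. norm x \<le> n \<and> norm (y - L x) < \<delta>"
    using bounded_approximate_preimage_near_zero[OF assms] by blast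
  define c where "c = 2 * max n 0 / r + 1"
  have "c > 0" using \<open>r > 0\<close> by (simp add: c_def add_nonneg_pos)
  have "\<exists>x\<in>X. norm x \<le> c * norm y \<and> norm (y - L x) < \<delta>"
    if "y \<in> L ` X" "\<delta> > 0" for y \<delta>
  proof (cases "y = 0")
    case True
    then show ?thesis
      using subspace_0[OF X] linear_0[OF L] \<open>\<delta> > 0\<close> by (intro bexI[of _ 0]) auto
  next
    case False
    define s where "s = r / (2 * norm y)"
    have "s > 0" using False \<open>r > 0\<close> by (simp add: s_def)
    have "s *\<^sub>R y \<in> L ` X" "norm (s *\<^sub>R y) < r"
      using that(1) subspace_scale[OF linear_subspace_image[OF L X]] False \<open>r > 0\<close>
      by (auto simp: s_def)
    then obtain x where "x \<in> X" "norm x \<le> n" "norm (s *\<^sub>R y - L x) < s * \<delta>"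
      using near_zero \<open>s > 0\<close> \<open>\<delta> > 0\<close> by (meson mult_pos_pos)
    moreover have "s *\<^sub>R y - L x = s *\<^sub>R (y - L ((1 / s) *\<^sub>R x))"
      using \<open>s > 0\<close> by (simp add: linear_scale[OF L] scaleR_diff_right)
    moreover have "norm ((1 / s) *\<^sub>R x) \<le> c * norm y"
    proof -
      have "norm ((1 / s) *\<^sub>R x) \<le> max n 0 / s"
        using \<open>norm x \<le> n\<close> \<open>s > 0\<close> by (simp add: divide_right_mono)
      also have "\<dots> = 2 * max n 0 / r * norm y"
        using False \<open>r > 0\<close> by (simp add: s_def field_simps)
      also have "\<dots> \<le> c * norm y"
        by (simp add: c_def distrib_right)
      finally show ?thesis .
    qed
    ultimately show ?thesis
      using subspace_scale[OF X] \<open>s > 0\<close> by (intro bexI[of _ "(1 / s) *\<^sub>R x"]) auto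
  qed
  with \<open>c > 0\<close> show ?thesis by blast
qed

lemma approximate_preimage_iteration:
  fixes L :: "'a::real_normed_vector \<Rightarrow> 'b::real_normed_vector"
  assumes L: "linear L" and X: "subspace X"
    and approx: "\<And>y \<delta>. y \<in> L ` X \<Longrightarrow> \<delta> > 0 \<Longrightarrow> \<exists>x\<in>X. norm x \<le> c * norm y \<and> norm (y - L x) < \<delta>"
    and "y \<in> L ` X"
  shows "\<exists>s. s 0 = 0 \<and> (\<forall>n. s n \<in> X \<and> norm (y - L (s n)) \<le> norm y / 2 ^ n \<and> norm (s n) \<le> 2 * c * norm y)
    \<and> (\<forall>n. norm (s (Suc n) - s n) \<le> c * norm y / 2 ^ n)"
proof (cases "y = 0")
  case True
  then show ?thesis
    using subspace_0[OF X] linear_0[OF L] by (intro exI[of _ "\<lambda>_. 0"]) auto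
next
  case False
  define ny where "ny = norm y"
  have "ny > 0" using False by (simp add: ny_def)
  have "c \<ge> 0"
    using approx[OF \<open>y \<in> L ` X\<close>, of 1] \<open>ny > 0\<close> unfolding ny_def
    by (meson norm_ge_zero order_trans zero_le_mult_iff zero_less_one not_le)
  \<comment> \<open>successive corrections \<open>s (n + 1) = s n + x\<close>, where \<open>x\<close> approximately solves \<open>L x = y - L (s n)\<close>\<close>
  define P where "P n s \<longleftrightarrow> s \<in> X \<and> norm (y - L s) \<le> ny / 2 ^ n \<and> norm s \<le> 2 * c * ny * (1 - 1 / 2 ^ n)"
    for n s
  have "\<exists>s. \<forall>n. P n (s n) \<and> norm (s (Suc n) - s n) \<le> c * ny / 2 ^ n"
  proof (rule dependent_nat_choice)
    show "\<exists>s. P 0 s"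
      using subspace_0[OF X] linear_0[OF L] by (auto simp: P_def ny_def)
  next
    fix s n assume "P n s"
    then have "s \<in> X" and close: "norm (y - L s) \<le> ny / 2 ^ n"
      and small: "norm s \<le> 2 * c * ny * (1 - 1 / 2 ^ n)"
      by (simp_all add: P_def)
    have "y - L s \<in> L ` X"
      using \<open>y \<in> L ` X\<close> \<open>s \<in> X\<close> subspace_diff[OF linear_subspace_image[OF L X]] by blast
    then obtain x where "x \<in> X" "norm x \<le> c * norm (y - L s)"
      and "norm (y - L s - L x) < ny / 2 ^ Suc n"
      using approx \<open>ny > 0\<close> by (meson divide_pos_pos zero_less_power zero_less_numeral)
    with \<open>c \<ge> 0\<close> have x_small: "norm x \<le> c * ny / 2 ^ n"
      using close by (metis mult_left_mono order_trans times_divide_eq_right)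
    have "norm (s + x) \<le> 2 * c * ny * (1 - 1 / 2 ^ n) + c * ny / 2 ^ n"
      using norm_triangle_ineq[of s x] small x_small by linarith
    also have "\<dots> = 2 * c * ny * (1 - 1 / 2 ^ Suc n)"
      by (simp add: field_simps)
    finally show "\<exists>s'. P (Suc n) s' \<and> norm (s' - s) \<le> c * ny / 2 ^ n"
      using subspace_add[OF X \<open>s \<in> X\<close> \<open>x \<in> X\<close>] \<open>norm (y - L s - L x) < ny / 2 ^ Suc n\<close> x_small
      by (intro exI[of _ "s + x"]) (auto simp: P_def linear_add[OF L] diff_diff_eq)
  qed
  then obtain s where s: "\<And>n. P n (s n)" and step: "\<And>n. norm (s (Suc n) - s n) \<le> c * ny / 2 ^ n"
    by blast
  have "norm (s n) \<le> 2 * c * ny" for n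
  proof -
    have "norm (s n) \<le> 2 * c * ny * (1 - 1 / 2 ^ n)"
      using s[of n] by (simp add: P_def)
    also have "\<dots> \<le> 2 * c * ny * 1"
      using \<open>c \<ge> 0\<close> \<open>ny > 0\<close> by (intro mult_left_mono) auto
    finally show ?thesis by simp
  qed
  moreover have "s 0 = 0"
    using s[of 0] by (simp add: P_def)
  ultimately show ?thesis
    using s step unfolding P_def ny_def by blast
qed

lemma exact_preimage_if_approximate:
  fixes L :: "'a::banach \<Rightarrow> 'b::real_normed_vector"
  assumes L: "bounded_linear L" and X: "subspace X" "closed X"
    and approx: "\<And>y \<delta>. y \<in> L ` X \<Longrightarrow> \<delta> > 0 \<Longrightarrow> \<exists>x\<in>X. norm x \<le> c * norm y \<and> norm (y - L x) < \<delta>"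
    and "y \<in> L ` X"
  shows "\<exists>x\<in>X. L x = y \<and> norm x \<le> 2 * c * norm y"
proof -
  obtain s where "s 0 = 0" and s: "\<And>n. s n \<in> X" "\<And>n. norm (y - L (s n)) \<le> norm y / 2 ^ n"
      "\<And>n. norm (s n) \<le> 2 * c * norm y"
    and step: "\<And>n. norm (s (Suc n) - s n) \<le> c * norm y / 2 ^ n"
    using approximate_preimage_iteration[OF bounded_linear.linear[OF L] X(1) approx \<open>y \<in> L ` X\<close>]
    by blast
  have "summable (\<lambda>k. norm (s (Suc k) - s k))"
  proof (rule summable_comparison_test')
    show "summable (\<lambda>k. c * norm y * (1 / 2) ^ k)"
      by (intro summable_mult summable_geometric) simp
    show "norm (norm (s (Suc k) - s k)) \<le> c * norm y * (1 / 2) ^ k" for k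
      using step[of k] by (simp add: power_divide)
  qed
  then have "(\<lambda>n. \<Sum>k<n. s (Suc k) - s k) \<longlonglongrightarrow> (\<Sum>k. s (Suc k) - s k)"
    by (rule summable_LIMSEQ[OF summable_norm_cancel])
  then obtain x where lim: "s \<longlonglongrightarrow> x"
    by (auto simp: sum_lessThan_telescope \<open>s 0 = 0\<close>)
  have "x \<in> X"
    using closed_sequentially[OF X(2) s(1) lim] .
  moreover have "L x = y"
  proof (rule LIMSEQ_unique)
    show "(\<lambda>n. L (s n)) \<longlonglongrightarrow> L x"
      by (rule bounded_linear.tendsto[OF L lim])
    have "(\<lambda>n. y - L (s n)) \<longlonglongrightarrow> 0"
    proof (rule Lim_null_comparison)
      show "\<forall>\<^sub>F n in sequentially. norm (y - L (s n)) \<le> norm y / 2 ^ n"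
        using s(2) by simp
      show "(\<lambda>n. norm y / 2 ^ n) \<longlonglongrightarrow> 0"
        by (rule LIMSEQ_divide_realpow_zero) simp
    qed
    then show "(\<lambda>n. L (s n)) \<longlonglongrightarrow> y"
      using tendsto_diff[OF tendsto_const[of y]] by fastforce
  qed
  moreover have "norm x \<le> 2 * c * norm y"
    using Lim_bounded[OF tendsto_norm[OF lim]] s(3) by blast
  ultimately show ?thesis by blast
qed

lemma bounded_preimage_if_closed_image:
  fixes L :: "'a::banach \<Rightarrow> 'b::banach"
  assumes L: "bounded_linear L" and X: "subspace X" "closed X" and "closed (L ` X)"
  shows "\<exists>C>0. \<forall>y\<in>L ` X. \<exists>x\<in>X. L x = y \<and> norm x \<le> C * norm y"
proof -
  obtain c where "c > 0"
    and "\<forall>y\<in>L ` X. \<forall>\<delta>>0. \<exists>x\<in>X. norm x \<le> c * norm y \<and> norm (y - L x) < \<delta>"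
    using bounded_approximate_preimage[OF bounded_linear.linear[OF L] X(1) \<open>closed (L ` X)\<close>] by blast
  then have "\<forall>y\<in>L ` X. \<exists>x\<in>X. L x = y \<and> norm x \<le> 2 * c * norm y"
    using exact_preimage_if_approximate[OF L X] by blast
  moreover have "2 * c > 0" using \<open>c > 0\<close> by simp
  ultimately show ?thesis by blast
qed

section \<open>Powers of the damping operator\<close>

lemma is_adjoint_sym: "is_adjoint A B \<Longrightarrow> is_adjoint B A"
  unfolding is_adjoint_def by (metis cinner_commute)

primrec op_power :: "('a::real_normed_vector \<Rightarrow>\<^sub>L 'a) \<Rightarrow> nat \<Rightarrow> ('a \<Rightarrow>\<^sub>L 'a)" where
  "op_power T 0 = id_blinfun"
| "op_power T (Suc n) = T o\<^sub>L op_power T n"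

lemma op_power_add_apply: "op_power T (m + n) x = op_power T m (op_power T n x)"
  by (induction m) simp_all

lemma op_power_Suc_right_apply: "op_power T (Suc n) x = op_power T n (T x)"
  using op_power_add_apply[of T n 1 x] by simp

lemma norm_op_power_apply_le:
  fixes T :: "'a::real_normed_vector \<Rightarrow>\<^sub>L 'a"
  assumes "\<And>x. norm (T x) \<le> norm x"
  shows "norm (op_power T n x) \<le> norm x"
  by (induction n) (use assms order_trans in auto)

lemma norm_id_minus_op_power_le:
  fixes T :: "'a::real_normed_vector \<Rightarrow>\<^sub>L 'a"
  assumes "\<And>x. norm (T x) \<le> norm x"
  shows "norm (id_blinfun - op_power T n) \<le> 2"
proof (rule norm_blinfun_bound)
  fix x
  have "norm (x - op_power T n x) \<le> norm x + norm (op_power T n x)"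
    by (rule norm_triangle_ineq4)
  also have "\<dots> \<le> 2 * norm x"
    using norm_op_power_apply_le[OF assms, of n x] by simp
  finally show "norm ((id_blinfun - op_power T n) x) \<le> 2 * norm x"
    by (simp add: blinfun.diff_left)
qed simp

definition damping :: "real \<Rightarrow> ('h::chilbert_space \<Rightarrow>\<^sub>L 'h) \<Rightarrow> ('h \<Rightarrow>\<^sub>L 'h) \<Rightarrow> ('h \<Rightarrow>\<^sub>L 'h)" where
  "damping M A B = id_blinfun - (1 / M) *\<^sub>R (B o\<^sub>L A)"

lemma damping_apply [simp]: "damping M A B x = x - (1 / M) *\<^sub>R B (A x)"
  by (simp add: damping_def blinfun.diff_left scaleR_blinfun.rep_eq)

lemma blinfun_compose_damping: "A o\<^sub>L damping M A B = damping M B A o\<^sub>L A"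
  by (rule blinfun_eqI) (simp add: blinfun.diff_right blinfun.scaleR_right)

lemma norm_damping_apply_power2_le:
  assumes "is_adjoint A B" and "(norm B)\<^sup>2 \<le> M" and "M > 0"
  shows "(norm (damping M A B x))\<^sup>2 \<le> (norm x)\<^sup>2 - (norm (A x))\<^sup>2 / M"
proof -
  have "Re (cinner x (B (A x))) = (norm (A x))\<^sup>2"
    using assms(1) unfolding is_adjoint_def by (metis Re_complex_of_real cinner_self)
  moreover have "(norm (B (A x)))\<^sup>2 \<le> M * (norm (A x))\<^sup>2"
  proof -
    have "(norm (B (A x)))\<^sup>2 \<le> (norm B * norm (A x))\<^sup>2"
      by (simp add: norm_blinfun power_mono)
    also have "\<dots> \<le> M * (norm (A x))\<^sup>2"
      using assms(2) by (simp add: power_mult_distrib mult_right_mono)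
    finally show ?thesis .
  qed
  ultimately have "(norm (x - (1 / M) *\<^sub>R B (A x)))\<^sup>2 \<le>
      (norm x)\<^sup>2 - 2 * ((norm (A x))\<^sup>2 / M) + M * (norm (A x))\<^sup>2 / M\<^sup>2"
    using \<open>M > 0\<close> by (simp add: norm_diff_power2 cinner_scaleR_right power_divide divide_right_mono)
  also have "\<dots> = (norm x)\<^sup>2 - (norm (A x))\<^sup>2 / M"
    using \<open>M > 0\<close> by (simp add: power2_eq_square field_simps)
  finally show ?thesis by simp
qed

lemma norm_damping_apply_le:
  assumes "is_adjoint A B" and "(norm B)\<^sup>2 \<le> M" and "M > 0"
  shows "norm (damping M A B x) \<le> norm x"
proof -
  have "(norm (A x))\<^sup>2 / M \<ge> 0"
    using \<open>M > 0\<close> by simp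
  then have "(norm (damping M A B x))\<^sup>2 \<le> (norm x)\<^sup>2"
    using norm_damping_apply_power2_le[OF assms, of x] by linarith
  then show ?thesis by (rule power2_le_imp_le) simp
qed

context
  fixes A B :: "'h::chilbert_space \<Rightarrow>\<^sub>L 'h" and M :: real
  assumes adjoint: "is_adjoint A B"
    and M: "(norm A)\<^sup>2 \<le> M" "(norm B)\<^sup>2 \<le> M" "M > 0"
begin

lemma norm_apply_damping_power_Suc_le:
  "norm (A (op_power (damping M A B) (Suc n) x)) \<le> norm (A (op_power (damping M A B) n x))"
proof -
  \<comment> \<open>\<open>A\<close> intertwines the damping of \<open>A\<^sup>*A\<close> with the damping of \<open>AA\<^sup>*\<close>, which is also a contraction\<close>
  have "A (op_power (damping M A B) (Suc n) x) = damping M B A (A (op_power (damping M A B) n x))"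
    by (simp add: blinfun.diff_right blinfun.scaleR_right)
  then show ?thesis
    using norm_damping_apply_le[OF is_adjoint_sym[OF adjoint] M(1,3)] by simp
qed

lemma sum_norm_apply_damping_power:
  "(\<Sum>j<n. (norm (A (op_power (damping M A B) j x)))\<^sup>2)
    \<le> M * ((norm x)\<^sup>2 - (norm (op_power (damping M A B) n x))\<^sup>2)"
proof (induction n)
  case 0
  then show ?case by simp
next
  case (Suc n)
  let ?w = "op_power (damping M A B) n x"
  have "(norm (A ?w))\<^sup>2 \<le> M * ((norm ?w)\<^sup>2 - (norm (damping M A B ?w))\<^sup>2)"
    using norm_damping_apply_power2_le[OF adjoint M(2,3), of ?w] M(3) by (simp add: field_simps)
  then show ?case
    using Suc by (simp add: algebra_simps)
qed

lemma norm_apply_damping_power_le: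
  fixes n :: nat
  assumes "n \<ge> 1"
  shows "norm (A (op_power (damping M A B) n x)) \<le> sqrt (M / real n) * norm x"
proof -
  define a where "a j = norm (A (op_power (damping M A B) j x))" for j
  have "real n * (a n)\<^sup>2 = (\<Sum>j<n. (a n)\<^sup>2)"
    by simp
  also have "\<dots> \<le> (\<Sum>j<n. (a j)\<^sup>2)"
    using lift_Suc_antimono_le[of a] norm_apply_damping_power_Suc_le
    by (intro sum_mono power_mono) (auto simp: a_def)
  also have "\<dots> \<le> M * (norm x)\<^sup>2"
    using sum_norm_apply_damping_power[of x n] M(3) unfolding a_def
    by (smt (verit) mult_left_mono zero_le_power2)
  finally have "(a n)\<^sup>2 \<le> (sqrt (M / real n) * norm x)\<^sup>2"
    using assms M(3) by (simp add: power_mult_distrib field_simps)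
  then show ?thesis
    unfolding a_def by (rule power2_le_imp_le) (use M(3) in simp)
qed

end

lemma Cauchy_if_dist_le:
  fixes f :: "nat \<Rightarrow> 'a::metric_space"
  assumes "\<beta> \<longlonglongrightarrow> 0" and "\<And>m n. N \<le> n \<Longrightarrow> n \<le> m \<Longrightarrow> dist (f m) (f n) \<le> \<beta> n"
  shows "Cauchy f"
proof (rule metric_CauchyI)
  fix e :: real assume "e > 0"
  then obtain n where "N \<le> n" "\<beta> n < e / 2"
    using order_tendstoD(2)[OF assms(1), of "e / 2"] eventually_sequentially
    by (metis half_gt_zero nle_le)
  have "dist (f m) (f k) < e" if "n \<le> m" "n \<le> k" for m k
  proof -
    have "dist (f m) (f k) \<le> dist (f m) (f n) + dist (f k) (f n)"
      by (rule dist_triangle2)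
    also have "\<dots> \<le> \<beta> n + \<beta> n"
      using assms(2) \<open>N \<le> n\<close> that by (intro add_mono) auto
    finally show ?thesis using \<open>\<beta> n < e / 2\<close> by linarith
  qed
  then show "\<exists>M. \<forall>m\<ge>M. \<forall>k\<ge>M. dist (f m) (f k) < e" by blast
qed

lemma op_power_converges_to_annihilator:
  fixes A K :: "'a::banach \<Rightarrow>\<^sub>L 'a"
  assumes decay: "\<beta> \<longlonglongrightarrow> 0" "\<And>n x. n \<ge> 1 \<Longrightarrow> norm (A (op_power K n x)) \<le> \<beta> n * norm x"
    and gap: "\<And>n x. norm (x - op_power K n x) \<le> C * norm (A x)"
    and nonneg: "C \<ge> 0" "\<And>n. \<beta> n \<ge> 0"
  shows "\<exists>E. op_power K \<longlonglongrightarrow> E \<and> (\<forall>z. A (E z) = 0)"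
proof -
  have "dist (op_power K m) (op_power K n) \<le> C * \<beta> n" if "1 \<le> n" "n \<le> m" for m n
    unfolding dist_norm
  proof (rule norm_blinfun_bound)
    fix x
    define w where "w = op_power K n x"
    have "op_power K m x = op_power K (m - n) w"
      using op_power_add_apply[of K "m - n" n x] \<open>n \<le> m\<close> by (simp add: w_def)
    then have "norm ((op_power K m - op_power K n) x) = norm (w - op_power K (m - n) w)"
      by (simp add: blinfun.diff_left w_def norm_minus_commute)
    also have "\<dots> \<le> C * norm (A w)"
      by (rule gap)
    also have "\<dots> \<le> C * (\<beta> n * norm x)"
      using decay(2)[OF \<open>1 \<le> n\<close>, of x] \<open>C \<ge> 0\<close> by (simp add: w_def mult_left_mono)
    finally show "norm ((op_power K m - op_power K n) x) \<le> C * \<beta> n * norm x"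
      by (simp add: mult.assoc)
  qed (use nonneg in simp)
  then have "Cauchy (op_power K)"
    by (intro Cauchy_if_dist_le[where N = 1 and \<beta> = "\<lambda>n. C * \<beta> n"])
      (use tendsto_mult_right_zero[OF decay(1)] in auto)
  then obtain E where lim: "op_power K \<longlonglongrightarrow> E"
    using Cauchy_convergent_iff convergent_def by blast
  have "A (E z) = 0" for z
  proof (rule LIMSEQ_unique)
    show "(\<lambda>n. A (op_power K n z)) \<longlonglongrightarrow> A (E z)"
      by (intro tendsto_intros lim)
    show "(\<lambda>n. A (op_power K n z)) \<longlonglongrightarrow> 0"
    proof (rule Lim_null_comparison)
      show "\<forall>\<^sub>F n in sequentially. norm (A (op_power K n z)) \<le> \<beta> n * norm z"
        using decay(2) eventually_sequentially by blast
      show "(\<lambda>n. \<beta> n * norm z) \<longlonglongrightarrow> 0"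
        using tendsto_mult_left_zero[OF decay(1)] by simp
    qed
  qed
  with lim show ?thesis by blast
qed

section \<open>The left ideal \<open>R A\<close>\<close>

lemma left_mult_set_add:
  assumes "von_neumann_algebra R" "S \<in> left_mult_set R A" "T \<in> left_mult_set R A"
  shows "S + T \<in> left_mult_set R A"
proof -
  obtain S' T' where "S' \<in> R" "T' \<in> R" "S = S' o\<^sub>L A" "T = T' o\<^sub>L A"
    using assms(2,3) unfolding left_mult_set_def by blast
  moreover have "(S' o\<^sub>L A) + (T' o\<^sub>L A) = (S' + T') o\<^sub>L A"
    by (rule blinfun_eqI) (simp add: blinfun.add_left)
  ultimately show ?thesis
    using von_neumann_algebra_add[OF assms(1)] unfolding left_mult_set_def by auto
qed

lemma id_minus_op_power_in_left_mult_set: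
  assumes V: "von_neumann_algebra R"
    and "K' \<in> R" "A o\<^sub>L K = K' o\<^sub>L A" and "id_blinfun - K \<in> left_mult_set R A"
  shows "id_blinfun - op_power K n \<in> left_mult_set R A"
proof (induction n)
  case 0
  have "id_blinfun - op_power K 0 = 0 o\<^sub>L A" by simp
  then show ?case
    using subspace_0[OF von_neumann_algebra_subspace[OF V]] unfolding left_mult_set_def
    by (metis image_eqI)
next
  case (Suc n)
  then obtain T where "T \<in> R" and T: "id_blinfun - op_power K n = T o\<^sub>L A"
    unfolding left_mult_set_def by blast
  have "id_blinfun - op_power K (Suc n) = (id_blinfun - K) + ((id_blinfun - op_power K n) o\<^sub>L K)"
    by (rule blinfun_eqI) (simp add: blinfun.diff_left blinfun.add_left op_power_Suc_right_apply del: op_power.simps)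
  also have "(id_blinfun - op_power K n) o\<^sub>L K = (T o\<^sub>L K') o\<^sub>L A"
  proof (rule blinfun_eqI)
    fix x
    have "A (K x) = K' (A x)"
      using arg_cong[OF \<open>A o\<^sub>L K = K' o\<^sub>L A\<close>, of "\<lambda>U. blinfun_apply U x"] by simp
    then show "((id_blinfun - op_power K n) o\<^sub>L K) x = ((T o\<^sub>L K') o\<^sub>L A) x"
      by (simp add: T)
  qed
  finally show ?case
    using left_mult_set_add[OF V assms(4)] von_neumann_algebra_compose[OF V \<open>T \<in> R\<close> \<open>K' \<in> R\<close>]
    unfolding left_mult_set_def by (metis image_eqI)
qed

lemma id_minus_damping_power_in_left_mult_set:
  assumes V: "von_neumann_algebra R" and "A \<in> R" "B \<in> R"
  shows "id_blinfun - op_power (damping M A B) n \<in> left_mult_set R A"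
proof (rule id_minus_op_power_in_left_mult_set[OF V _ blinfun_compose_damping])
  show "damping M B A \<in> R"
    unfolding damping_def
    by (intro subspace_diff[OF von_neumann_algebra_subspace[OF V]] von_neumann_algebra_id[OF V]
        von_neumann_algebra_scaleR[OF V] von_neumann_algebra_compose[OF V] assms(2,3))
  have "id_blinfun - damping M A B = ((1 / M) *\<^sub>R B) o\<^sub>L A"
    by (rule blinfun_eqI) (simp add: scaleR_blinfun.rep_eq blinfun.diff_left)
  then show "id_blinfun - damping M A B \<in> left_mult_set R A"
    using von_neumann_algebra_scaleR[OF V \<open>B \<in> R\<close>] unfolding left_mult_set_def by auto
qed

lemma norm_apply_left_mult_set_le:
  fixes R :: "('h::chilbert_space \<Rightarrow>\<^sub>L 'h) set"
  assumes V: "von_neumann_algebra R" and "closed (left_mult_set R A)"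
  shows "\<exists>C>0. \<forall>U\<in>left_mult_set R A. \<forall>x. norm (blinfun_apply U x) \<le> C * norm U * norm (A x)"
proof -
  have L: "bounded_linear (\<lambda>T. T o\<^sub>L A)"
    by (rule bounded_bilinear.bounded_linear_left[OF bounded_bilinear_blinfun_compose])
  \<comment> \<open>open mapping for \<open>T \<mapsto> T A\<close> on the Banach space \<open>R\<close>, whose image is the left ideal\<close>
  obtain C where "C > 0"
    and C: "\<forall>U\<in>(\<lambda>T. T o\<^sub>L A) ` R. \<exists>T\<in>R. T o\<^sub>L A = U \<and> norm T \<le> C * norm U"
    using bounded_preimage_if_closed_image[OF L von_neumann_algebra_subspace[OF V]
        von_neumann_algebra_closed[OF V]] assms(2)
    unfolding left_mult_set_def by blast
  have "norm (blinfun_apply U x) \<le> C * norm U * norm (A x)" if "U \<in> left_mult_set R A" for U x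
  proof -
    have "U \<in> (\<lambda>T. T o\<^sub>L A) ` R"
      using that unfolding left_mult_set_def .
    then obtain T where "T o\<^sub>L A = U" "norm T \<le> C * norm U"
      using C by blast
    then have "norm (blinfun_apply U x) = norm (T (A x))"
      by (metis blinfun_apply_blinfun_compose)
    also have "\<dots> \<le> norm T * norm (A x)"
      by (rule norm_blinfun)
    also have "\<dots> \<le> C * norm U * norm (A x)"
      by (rule mult_right_mono[OF \<open>norm T \<le> C * norm U\<close>]) simp
    finally show ?thesis .
  qed
  with \<open>C > 0\<close> show ?thesis by blast
qed

lemma left_mult_set_contains_id_minus_annihilator:
  assumes V: "von_neumann_algebra R" and "A \<in> R" and closed: "closed (left_mult_set R A)"
  shows "\<exists>E. id_blinfun - E \<in> left_mult_set R A \<and> (\<forall>z. A (E z) = 0)"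
proof -
  obtain B where "B \<in> R" and adjoint: "is_adjoint A B"
    using von_neumann_algebra_adjoint[OF V \<open>A \<in> R\<close>] by blast
  define M where "M = (norm A)\<^sup>2 + (norm B)\<^sup>2 + 1"
  have M: "(norm A)\<^sup>2 \<le> M" "(norm B)\<^sup>2 \<le> M" "M > 0"
    unfolding M_def by (simp_all add: add_nonneg_pos)
  define K where "K = damping M A B"
  have in_ideal: "id_blinfun - op_power K n \<in> left_mult_set R A" for n
    unfolding K_def by (rule id_minus_damping_power_in_left_mult_set[OF V \<open>A \<in> R\<close> \<open>B \<in> R\<close>])
  obtain C where "C > 0"
    and C: "\<And>U x. U \<in> left_mult_set R A \<Longrightarrow> norm (blinfun_apply U x) \<le> C * norm U * norm (A x)"
    using norm_apply_left_mult_set_le[OF V closed] by blast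
  have "norm (x - op_power K n x) \<le> 2 * C * norm (A x)" for n x
  proof -
    have "norm (x - op_power K n x) \<le> C * norm (id_blinfun - op_power K n) * norm (A x)"
      using C[OF in_ideal] by (simp add: blinfun.diff_left)
    also have "\<dots> \<le> C * 2 * norm (A x)"
      using norm_id_minus_op_power_le[OF norm_damping_apply_le[OF adjoint M(2,3)]] \<open>C > 0\<close>
      by (intro mult_right_mono mult_left_mono) (auto simp: K_def)
    finally show ?thesis by simp
  qed
  moreover have "(\<lambda>n. M / real n) \<longlonglongrightarrow> 0"
    by (rule tendsto_divide_0[OF tendsto_const filterlim_at_top_imp_at_infinity[OF filterlim_real_sequentially]])
  then have "(\<lambda>n. sqrt (M / real n)) \<longlonglongrightarrow> 0"
    using tendsto_real_sqrt by fastforce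
  moreover have "C \<ge> 0" using \<open>C > 0\<close> by simp
  ultimately obtain E where "op_power K \<longlonglongrightarrow> E" and E: "\<forall>z. A (E z) = 0"
    using op_power_converges_to_annihilator[where \<beta> = "\<lambda>n. sqrt (M / real n)" and C = "2 * C" and K = K and A = A]
      norm_apply_damping_power_le[OF adjoint M] M(3) unfolding K_def by auto
  then have "(\<lambda>n. id_blinfun - op_power K n) \<longlonglongrightarrow> id_blinfun - E"
    by (intro tendsto_intros)
  then have "id_blinfun - E \<in> left_mult_set R A"
    by (rule closed_sequentially[OF closed in_ideal])
  with E show ?thesis by blast
qed

lemma wot_closed_left_mult_set_if_annihilator:
  assumes V: "von_neumann_algebra R" and "A \<in> R"
    and "id_blinfun - E \<in> left_mult_set R A" and "\<And>z. A (E z) = 0"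
  shows "wot_closed (left_mult_set R A)"
  unfolding wot_closed_def
proof (intro allI impI)
  fix S assume S: "bounded_op S \<and> wot_adherent (left_mult_set R A) S"
  obtain T where "T \<in> R" and T: "id_blinfun - E = T o\<^sub>L A"
    using assms(3) unfolding left_mult_set_def by blast
  have "S \<in> R"
    using S wot_adherent_mono[OF left_mult_set_subset[OF V \<open>A \<in> R\<close>]] von_neumann_algebra_wot_closed[OF V]
    unfolding wot_closed_def by blast
  \<comment> \<open>\<open>S\<close> vanishes on the kernel of \<open>A\<close>, which contains the range of \<open>E\<close>\<close>
  have "S = (S o\<^sub>L T) o\<^sub>L A"
  proof (rule blinfun_eqI)
    fix z
    have "S (E z) = 0"
      using S wot_adherent_left_mult_set_vanishes assms(4) by blast
    then have "S z = S ((id_blinfun - E) z)"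
      by (simp add: blinfun.diff_left blinfun.diff_right)
    then show "S z = ((S o\<^sub>L T) o\<^sub>L A) z"
      by (simp add: T)
  qed
  then show "S \<in> left_mult_set R A"
    using von_neumann_algebra_compose[OF V \<open>S \<in> R\<close> \<open>T \<in> R\<close>] unfolding left_mult_set_def by blast
qed

theorem proposition3p3:
  fixes R :: "('h::chilbert_space \<Rightarrow>\<^sub>L 'h) set" and A :: "'h \<Rightarrow>\<^sub>L 'h"
  assumes "von_neumann_algebra R" and "A \<in> R"
  shows "closed (left_mult_set R A) \<longleftrightarrow> wot_closed (left_mult_set R A)"
proof
  assume "closed (left_mult_set R A)"
  then obtain E where "id_blinfun - E \<in> left_mult_set R A" "\<forall>z. A (E z) = 0"
    using left_mult_set_contains_id_minus_annihilator[OF assms] by blast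
  then show "wot_closed (left_mult_set R A)"
    using wot_closed_left_mult_set_if_annihilator[OF assms] by blast
next
  assume "wot_closed (left_mult_set R A)"
  then show "closed (left_mult_set R A)"
    using closed_if_wot_closed left_mult_set_subset[OF assms] von_neumann_algebra_bounded_op[OF assms(1)]
    by blast
qed

end
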